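(* Let $k_1,k_2\ge0$, $\beta\in W(k_1,k_2)$ and $T\in J\otimes\mathbb{C}$. Then $\{P_{k_1,k_2}(T),\beta\}$ lies in $S^{[k_1,k_2]}$, the kernel of the contraction map $S^{k_1}(V_3)\otimes S^{k_2}(\wedge^2V_3)\to S^{k_1-1}(V_3)\otimes S^{k_2-1}(\wedge^2V_3)\otimes\det(V_3)$ induced by $V_3\otimes\wedge^2V_3\to\wedge^3V_3=\det(V_3)$ (the highest weight submodule).
   Context: $\Theta$ is the rational positive definite octonions with trace form $(a,b)=\mathrm{tr}(ab^* )$; $V_7=\Theta^0$ the trace-zero octonions; $J=H_3(\Theta)$ with off-diagonal entries $a_1,a_2,a_3$ (in positions $(2,3),(3,1),(1,2)$ up to conjugation). $V_3$ is a 3-dimensional complex space with basis $v_1,v_2,v_3$, $\mathcal{P}:J\to V_3\otimes V_7$, $\mathcal{P}(T)=\sum_i v_i\otimes(a_i-\frac12\mathrm{tr}(a_i))$, and $P_{k_1,k_2}(T)$ is the image of $\mathcal{P}(T)^{\otimes(k_1+2k_2)}$ in $S^{k_1}(V_3)\otimes V_7^{\otimes k_1}\otimes S^{k_2}(\wedge^2V_3)\otimes(\wedge^2V_7)^{\otimes k_2}$ (symmetrizing the first $k_1$ factors and wedging the remaining factors in consecutive pairs, $(v\otimes x)\otimes(v'\otimes x')\mapsto(v\wedge v')\otimes(x\wedge x')$, then symmetrizing). $W(k_1,k_2)\subset V_7^{\otimes k_1}\otimes(\wedge^2V_7)^{\otimes k_2}\otimes\mathbb{C}$ is the irreducible $G_2(\mathbb{C})$-representation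 of highest weight $k_1\omega_1+k_2\omega_2$ generated by $v_{\omega_1}^{\otimes k_1}\otimes v_{\omega_2}^{\otimes k_2}$ (highest weight vectors of $V_7$ and of $\mathfrak{g}_2\subset\wedge^2V_7$ for a common Borel). $\{\cdot,\beta\}$ contracts the $V_7$-tensor factors against $\beta$ using the trace form on $V_7$ and its induced form on $\wedge^2V_7$, producing an element of $S^{k_1}(V_3)\otimes S^{k_2}(\wedge^2V_3)$. *)

theory Defs
  imports Complex_Main "HOL-Combinatorics.Permutations"
begin

text \<open>A complexified octonion is represented by its coordinates w.r.t. the standard
basis e0 = 1, e1, ..., e7: a function nat => complex of which only the values at
0..7 are meaningful (genuine octonions vanish at indices >= 8).
The multiplication is the Cayley octonion table: e_i e_i = -1 for i = 1..7 and
e_i e_(i+1) = e_(i+3) (indices mod 7), i.e. the oriented lines of the Fano plane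
below. This is the (positive definite) octonion algebra, tensored with C.\<close>

type_synonym oct = "nat \<Rightarrow> complex"

definition oct_space :: "oct set" where
  "oct_space = {x. \<forall>k\<ge>8. x k = 0}"

definition fano :: "(nat \<times> nat \<times> nat) list" where
  "fano = [(1,2,4),(2,3,5),(3,4,6),(4,5,7),(5,6,1),(6,7,2),(7,1,3)]"

definition is_triple :: "nat \<Rightarrow> nat \<Rightarrow> nat \<Rightarrow> bool" where
  "is_triple a b c \<longleftrightarrow> (a,b,c) \<in> set fano \<or> (b,c,a) \<in> set fano \<or> (c,a,b) \<in> set fano"

definition sc :: "nat \<Rightarrow> nat \<Rightarrow> nat \<Rightarrow> complex" where
  "sc i j k =
     (if i = 0 then (if j = k then 1 else 0)
      else if j = 0 then (if i = k then 1 else 0)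
      else if i = j then (if k = 0 then -1 else 0)
      else if is_triple i j k then 1
      else if is_triple j i k then -1
      else 0)"

definition omul :: "oct \<Rightarrow> oct \<Rightarrow> oct" where
  "omul x y = (\<lambda>k. \<Sum>i<8. \<Sum>j<8. x i * y j * sc i j k)"

definition oone :: oct where
  "oone = (\<lambda>k. if k = 0 then 1 else 0)"

definition ozero :: oct where
  "ozero = (\<lambda>k. 0)"

definition obasis :: "nat \<Rightarrow> oct" where
  "obasis m = (\<lambda>k. if k = m then 1 else 0)"

definition oconj :: "oct \<Rightarrow> oct" where
  "oconj a = (\<lambda>k. if k = 0 then a 0 else - a k)"

definition otr :: "oct \<Rightarrow> complex" where
  "otr a = a 0 + oconj a 0"

definition tform :: "oct \<Rightarrow> oct \<Rightarrow> complex" where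
  "tform a b = otr (omul a (oconj b))"

definition oim :: "oct \<Rightarrow> oct" where
  "oim a = (\<lambda>k. a k - (otr a / 2) * oone k)"

definition V7 :: "oct set" where
  "V7 = {x \<in> oct_space. otr x = 0}"

definition oact :: "(nat \<Rightarrow> nat \<Rightarrow> complex) \<Rightarrow> oct \<Rightarrow> oct" where
  "oact g x = (\<lambda>k. \<Sum>j<8. g k j * x j)"

definition G2C :: "(nat \<Rightarrow> nat \<Rightarrow> complex) set" where
  "G2C = {g. bij_betw (oact g) oct_space oct_space \<and>
             (\<forall>x\<in>oct_space. \<forall>y\<in>oct_space. oact g (omul x y) = omul (oact g x) (oact g y))}"

definition idx :: "nat set \<Rightarrow> nat \<Rightarrow> nat list set" where
  "idx D n = {xs. length xs = n \<and> set xs \<subseteq> D}"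

text \<open>V7 has basis e1..e7 (indices 1..7), V3 has basis v1,v2,v3 (indices 0,1,2),
and wedge^2 V3 has basis w_p = v_(p+1) wedge v_(p+2) (indices mod 3).
An element of V7^(tensor n) tensor C is a function on idx {1..7} n.
The space V7^(tensor k1) tensor (wedge^2 V7)^(tensor k2) is realised inside
V7^(tensor (k1+2k2)) via  x wedge y |-> x tensor y - y tensor x  on each
consecutive pair of the last 2 k2 factors.\<close>

definition idx7 :: "nat \<Rightarrow> nat list set" where
  "idx7 n = idx {1..7} n"

definition idx3 :: "nat \<Rightarrow> nat list set" where
  "idx3 n = idx {0..2} n"

definition tact :: "(nat \<Rightarrow> nat \<Rightarrow> complex) \<Rightarrow> (nat list \<Rightarrow> complex) \<Rightarrow> nat list \<Rightarrow> complex" where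
  "tact g t m = (\<Sum>j\<in>idx7 (length m). (\<Prod>a<length m. g (m!a) (j!a)) * t j)"

text \<open>the tensor x1 (x) ... (x) xk1 (x) (y1 wedge z1) (x) ... (x) (yk2 wedge zk2),
realised as above; xs, ys, zs give the vectors\<close>
definition pure_tensor ::
  "nat \<Rightarrow> nat \<Rightarrow> (nat \<Rightarrow> oct) \<Rightarrow> (nat \<Rightarrow> oct) \<Rightarrow> (nat \<Rightarrow> oct) \<Rightarrow> nat list \<Rightarrow> complex" where
  "pure_tensor k1 k2 xs ys zs m =
     (\<Prod>a<k1. xs a (m!a)) *
     (\<Prod>b<k2. ys b (m!(k1+2*b)) * zs b (m!(k1+2*b+1))
             - zs b (m!(k1+2*b)) * ys b (m!(k1+2*b+1)))"

text \<open>highest weight vector v_omega1^(tensor k1) (x) v_omega2^(tensor k2), where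
v_omega1 = u1 and v_omega2 = u1 wedge u2\<close>
definition hw_vec :: "oct \<Rightarrow> oct \<Rightarrow> nat \<Rightarrow> nat \<Rightarrow> nat list \<Rightarrow> complex" where
  "hw_vec u1 u2 k1 k2 = pure_tensor k1 k2 (\<lambda>_. u1) (\<lambda>_. u1) (\<lambda>_. u2)"

text \<open>Highest weight vectors of V7 and of g2 inside wedge^2 V7 for a common Borel:
u1 spans the Borel-fixed (null) line and u1 wedge u2 the highest root line,
where span{u1,u2} is a 2-dimensional null subalgebra (all products vanish).
The pairs (C u1, span{u1,u2}) of this kind are exactly the flags fixed by Borel
subgroups of G2(C) (G2/B).\<close>
definition hw_pair :: "oct \<Rightarrow> oct \<Rightarrow> bool" where
  "hw_pair u1 u2 \<longleftrightarrow> u1 \<in> V7 \<and> u2 \<in> V7 \<and>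
     (\<forall>c1 c2. (\<forall>k. c1 * u1 k + c2 * u2 k = 0) \<longrightarrow> c1 = 0 \<and> c2 = 0) \<and>
     omul u1 u1 = ozero \<and> omul u1 u2 = ozero \<and> omul u2 u1 = ozero \<and> omul u2 u2 = ozero"

text \<open>W(k1,k2): the G2(C)-submodule generated by the highest weight vector,
i.e. the linear span of its G2(C)-orbit\<close>
definition Wrep :: "oct \<Rightarrow> oct \<Rightarrow> nat \<Rightarrow> nat \<Rightarrow> (nat list \<Rightarrow> complex) set" where
  "Wrep u1 u2 k1 k2 =
     {\<beta>. \<exists>G c. finite G \<and> G \<subseteq> G2C \<and>
          (\<forall>m. \<beta> m = (\<Sum>g\<in>G. c g * tact g (hw_vec u1 u2 k1 k2) m))}"

text \<open>T in H_3(octonions) tensor C, as a 3x3 matrix (indices 0,1,2) of complex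
octonions, Hermitian w.r.t. octonion conjugation, with scalar diagonal.\<close>
definition JC :: "(nat \<Rightarrow> nat \<Rightarrow> oct) set" where
  "JC = {T. (\<forall>i<3. \<forall>j<3. T i j \<in> oct_space \<and> T i j = oconj (T j i)) \<and>
            (\<forall>i<3. \<forall>k\<in>{1..7}. T i i k = 0)}"

text \<open>off-diagonal entries a1, a2, a3 in positions (2,3), (3,1), (1,2)\<close>
definition offdiag :: "(nat \<Rightarrow> nat \<Rightarrow> oct) \<Rightarrow> nat \<Rightarrow> oct" where
  "offdiag T i = (if i = 0 then T 1 2 else if i = 1 then T 2 0 else T 0 1)"

text \<open>P(T) = sum_i v_i (x) x_i with x_i = a_i - tr(a_i)/2\<close>
definition Pvec :: "(nat \<Rightarrow> nat \<Rightarrow> oct) \<Rightarrow> nat \<Rightarrow> oct" where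
  "Pvec T i = oim (offdiag T i)"

text \<open>Pairing of V7^(tensor k1) (x) (wedge^2 V7)^(tensor k2) with itself: trace form
on V7 factors, induced (determinant) form on wedge^2 V7 factors.  In the
realisation above the induced form is 1/2 of the tensor form on each pair.\<close>
definition pairing :: "nat \<Rightarrow> nat \<Rightarrow> (nat list \<Rightarrow> complex) \<Rightarrow> (nat list \<Rightarrow> complex) \<Rightarrow> complex" where
  "pairing k1 k2 s t =
     (1/2)^k2 * (\<Sum>m\<in>idx7 (k1+2*k2). \<Sum>m'\<in>idx7 (k1+2*k2).
        s m * t m' * (\<Prod>a<k1+2*k2. tform (obasis (m!a)) (obasis (m'!a))))"

text \<open>Levi-Civita symbol on {0,1,2}: v_j wedge v_l = sum_p eps j l p * w_p\<close>
definition eps3 :: "nat \<Rightarrow> nat \<Rightarrow> nat \<Rightarrow> complex" where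
  "eps3 j l p = (if (j,l,p) \<in> {(0,1,2),(1,2,0),(2,0,1)} then 1
                 else if (j,l,p) \<in> {(1,0,2),(2,1,0),(0,2,1)} then -1 else 0)"

text \<open>{P_{k1,k2}(T), beta} written as a (not yet symmetrised) tensor in
V3^(tensor k1) (x) (wedge^2 V3)^(tensor k2) (coordinates r in idx3 k1 for the V3
factors, s in idx3 k2 for the wedge^2 V3 factors w.r.t. the basis w_p).
P(T)^(tensor n) = sum over i in idx3 n of (v_i1 (x) x_i1) (x) ... ; the V3 parts
of the last 2 k2 factors are wedged in consecutive pairs, and the V7 parts are
paired against beta.\<close>
definition PT_beta :: "nat \<Rightarrow> nat \<Rightarrow> (nat \<Rightarrow> nat \<Rightarrow> oct) \<Rightarrow> (nat list \<Rightarrow> complex)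
                       \<Rightarrow> nat list \<Rightarrow> nat list \<Rightarrow> complex" where
  "PT_beta k1 k2 T \<beta> r s =
     (\<Sum>i\<in>idx3 (k1+2*k2).
        (if take k1 i = r then 1 else 0) *
        (\<Prod>b<k2. eps3 (i!(k1+2*b)) (i!(k1+2*b+1)) (s!b)) *
        pairing k1 k2
          (pure_tensor k1 k2 (\<lambda>a. Pvec T (i!a)) (\<lambda>b. Pvec T (i!(k1+2*b)))
                              (\<lambda>b. Pvec T (i!(k1+2*b+1)))) \<beta>)"

definition permute_list :: "(nat \<Rightarrow> nat) \<Rightarrow> nat list \<Rightarrow> nat list" where
  "permute_list \<sigma> r = map (\<lambda>a. r ! \<sigma> a) [0..<length r]"

text \<open>S^k1(V3) (x) S^k2(wedge^2 V3) identified with symmetric tensors via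
symmetrisation: this is the image of PT_beta in the symmetric powers\<close>
definition sym_tensor :: "nat \<Rightarrow> nat \<Rightarrow> (nat list \<Rightarrow> nat list \<Rightarrow> complex) \<Rightarrow> nat list \<Rightarrow> nat list \<Rightarrow> complex" where
  "sym_tensor k1 k2 F r s =
     (1 / (fact k1 * fact k2)) *
     (\<Sum>\<sigma>\<in>{\<sigma>. \<sigma> permutes {..<k1}}. \<Sum>\<tau>\<in>{\<tau>. \<tau> permutes {..<k2}}.
        F (permute_list \<sigma> r) (permute_list \<tau> s))"

text \<open>S^[k1,k2]: kernel of the contraction S^k1(V3) (x) S^k2(wedge^2 V3) ->
S^(k1-1)(V3) (x) S^(k2-1)(wedge^2 V3) (x) det V3 induced by v (x) w |-> v wedge w.
On symmetric tensors this is contraction of one V3 slot with one wedge^2 V3 slot,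
using v_i wedge w_p = delta_ip v1 wedge v2 wedge v3.  (If k1 = 0 or k2 = 0 the
target is 0.)\<close>
definition in_S_kernel :: "nat \<Rightarrow> nat \<Rightarrow> (nat list \<Rightarrow> nat list \<Rightarrow> complex) \<Rightarrow> bool" where
  "in_S_kernel k1 k2 S \<longleftrightarrow>
     k1 = 0 \<or> k2 = 0 \<or>
     (\<forall>r\<in>idx3 (k1-1). \<forall>s\<in>idx3 (k2-1). (\<Sum>i<3. S (i#r) (i#s)) = 0)"

end

theory Submission
  imports Defs
begin

(* W(k1,k2) is spanned by the translates g.(u1^k1 (x) (u1 wedge u2)^k2), which are again
   tensors w1^k1 (x) (w1 wedge w2)^k2, so by linearity it suffices to treat one of these.
   Pairing P(T)^(k1+2k2) against it factors slot by slot: with alpha = sum_i (x_i, w1) v_i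
   and gamma = sum_i (x_i, w2) v_i in V3 one gets a multiple of alpha^k1 (alpha wedge gamma)^k2,
   a symmetric tensor whose contraction V3 (x) wedge^2 V3 -> det V3 is a multiple of
   alpha wedge alpha wedge gamma = 0. *)

lemma idx_0 [simp]: "idx D 0 = {[]}"
  by (auto simp: idx_def)

lemma sum_idx_Suc: "(\<Sum>m\<in>idx D (Suc n). F m) = (\<Sum>d\<in>D. \<Sum>xs\<in>idx D n. F (d # xs))"
proof -
  have idx_Suc: "idx D (Suc n) = (\<lambda>(d, xs). d # xs) ` (D \<times> idx D n)"
    by (auto simp: idx_def image_iff length_Suc_conv)
  have "inj_on (\<lambda>(d, xs). d # xs) (D \<times> idx D n)"
    by (auto simp: inj_on_def)
  then show ?thesis
    unfolding idx_Suc by (simp add: sum.reindex sum.cartesian_product split_def)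
qed

lemma sum_idx_prod_pairs:
  fixes h :: "nat \<Rightarrow> nat \<Rightarrow> nat \<Rightarrow> 'a::comm_semiring_1"
  shows "(\<Sum>m\<in>idx D (2*k). \<Prod>b<k. h b (m!(2*b)) (m!(2*b+1))) = (\<Prod>b<k. \<Sum>d\<in>D. \<Sum>e\<in>D. h b d e)"
proof (induction k arbitrary: h)
  case 0
  then show ?case by simp
next
  case (Suc k)
  have double_Suc: "2 * Suc b = Suc (Suc (2*b))" for b :: nat
    by simp
  have "(\<Sum>m\<in>idx D (2 * Suc k). \<Prod>b<Suc k. h b (m!(2*b)) (m!(2*b+1)))
      = (\<Sum>d\<in>D. \<Sum>e\<in>D. h 0 d e * (\<Sum>xs\<in>idx D (2*k). \<Prod>b<k. h (Suc b) (xs!(2*b)) (xs!(2*b+1))))"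
    unfolding double_Suc sum_idx_Suc prod.lessThan_Suc_shift
    by (simp add: sum_distrib_left del: mult_Suc_right)
  also have "\<dots> = (\<Prod>b<Suc k. \<Sum>d\<in>D. \<Sum>e\<in>D. h b d e)"
    unfolding Suc.IH[of "\<lambda>b. h (Suc b)"] prod.lessThan_Suc_shift
    by (simp add: sum_distrib_right del: prod.lessThan_Suc)
  finally show ?case .
qed

lemma sum_idx_prod_blocks:
  fixes f :: "nat \<Rightarrow> nat \<Rightarrow> 'a::comm_semiring_1"
  shows "(\<Sum>m\<in>idx D (k1+2*k2). (\<Prod>a<k1. f a (m!a)) * (\<Prod>b<k2. h b (m!(k1+2*b)) (m!(k1+2*b+1))))
       = (\<Prod>a<k1. \<Sum>d\<in>D. f a d) * (\<Prod>b<k2. \<Sum>d\<in>D. \<Sum>e\<in>D. h b d e)"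
proof (induction k1 arbitrary: f)
  case 0
  show ?case using sum_idx_prod_pairs[where D = D and k = k2 and h = h] by simp
next
  case (Suc k)
  have "(\<Sum>m\<in>idx D (Suc k+2*k2). (\<Prod>a<Suc k. f a (m!a)) * (\<Prod>b<k2. h b (m!(Suc k+2*b)) (m!(Suc k+2*b+1))))
      = (\<Sum>d\<in>D. f 0 d * (\<Sum>xs\<in>idx D (k+2*k2).
           (\<Prod>a<k. f (Suc a) (xs!a)) * (\<Prod>b<k2. h b (xs!(k+2*b)) (xs!(k+2*b+1)))))"
    unfolding add_Suc sum_idx_Suc prod.lessThan_Suc_shift
    by (simp add: sum_distrib_left mult.assoc del: prod.lessThan_Suc)
  also have "\<dots> = (\<Prod>a<Suc k. \<Sum>d\<in>D. f a d) * (\<Prod>b<k2. \<Sum>d\<in>D. \<Sum>e\<in>D. h b d e)"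
    unfolding Suc.IH[of "\<lambda>a. f (Suc a)"] prod.lessThan_Suc_shift
    by (simp add: sum_distrib_right mult.assoc del: prod.lessThan_Suc)
  finally show ?case .
qed

lemma finite_idx: "finite D \<Longrightarrow> finite (idx D n)"
  using finite_lists_length_eq[of D n] by (simp add: idx_def conj_commute)

lemma prod_lessThan_add_pairs:
  fixes g :: "nat \<Rightarrow> 'a::comm_monoid_mult"
  shows "(\<Prod>a<k1+2*k2. g a) = (\<Prod>a<k1. g a) * (\<Prod>b<k2. g (k1+2*b) * g (k1+2*b+1))"
  by (induction k2) (simp_all add: mult.assoc)

lemma tform_obasis:
  assumes "p \<in> {1..7}" "q \<in> {1..7}"
  shows "tform (obasis p) (obasis q) = (if p = q then 2 else 0)"
proof -
  have p: "p < 8" "p \<noteq> 0" and q: "q < 8" "q \<noteq> 0"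
    using assms by auto
  have conj_obasis: "oconj (obasis q) = (\<lambda>j. if j = q then -1 else 0)"
    using q by (auto simp: oconj_def obasis_def)
  have "omul (obasis p) (oconj (obasis q)) 0 = (\<Sum>j<8. oconj (obasis q) j * sc p j 0)"
    unfolding omul_def using p
    by (simp add: obasis_def if_distrib[of "\<lambda>x. x * _"] sum.swap[of _ "{..<8}"] sum.delta' cong: if_cong)
  also have "\<dots> = - sc p q 0"
    using q by (simp add: conj_obasis if_distrib[of "\<lambda>x. x * _"] sum.delta' cong: if_cong)
  also have "\<dots> = (if p = q then 1 else 0)"
    using p q by (simp add: sc_def is_triple_def fano_def)
  finally show ?thesis
    by (simp add: tform_def otr_def oconj_def)
qed

lemma prod_tform_obasis:
  assumes m: "m \<in> idx7 n" and m': "m' \<in> idx7 n"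
  shows "(\<Prod>a<n. tform (obasis (m!a)) (obasis (m'!a))) = (if m = m' then 2^n else 0)"
proof -
  have len: "length m = n" "length m' = n" and sets: "set m \<subseteq> {1..7}" "set m' \<subseteq> {1..7}"
    using m m' by (auto simp: idx7_def idx_def)
  have entries: "m!a \<in> {1..7}" "m'!a \<in> {1..7}" if "a < n" for a
    using len sets that by (metis nth_mem subsetD)+
  have "(\<Prod>a<n. tform (obasis (m!a)) (obasis (m'!a))) = (\<Prod>a<n. if m!a = m'!a then 2 else 0)"
    using entries by (intro prod.cong) (simp_all add: tform_obasis)
  also have "\<dots> = (if m = m' then 2^n else 0)"
  proof (cases "m = m'")
    case False
    then obtain a where "a < n" "m!a \<noteq> m'!a"
      using len nth_equalityI by metis
    then show ?thesis
      using False by (auto simp: prod_zero_iff)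
  qed simp
  finally show ?thesis .
qed

lemma pairing_eq_sum:
  "pairing k1 k2 X Y = 2^(k1+k2) * (\<Sum>m\<in>idx7 (k1+2*k2). X m * Y m)"
proof -
  let ?n = "k1+2*k2"
  have finite: "finite (idx7 ?n)"
    by (simp add: idx7_def finite_idx)
  have "(\<Sum>m\<in>idx7 ?n. \<Sum>m'\<in>idx7 ?n. X m * Y m' * (\<Prod>a<?n. tform (obasis (m!a)) (obasis (m'!a))))
      = (\<Sum>m\<in>idx7 ?n. \<Sum>m'\<in>idx7 ?n. if m = m' then 2^?n * (X m * Y m) else 0)"
    by (intro sum.cong refl) (simp add: prod_tform_obasis)
  also have "\<dots> = 2^?n * (\<Sum>m\<in>idx7 ?n. X m * Y m)"
    using finite by (simp add: sum.delta sum_distrib_left)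
  moreover have "(1/2)^k2 * 2^?n = (2::complex)^(k1+k2)"
    by (simp add: power_add power_mult power2_eq_square field_simps)
  ultimately show ?thesis
    by (simp add: pairing_def)
qed

definition dot7 :: "oct \<Rightarrow> oct \<Rightarrow> complex" where
  "dot7 x y = (\<Sum>d\<in>{1..7}. x d * y d)"

lemma binet_cauchy_sum:
  fixes y z w v :: "'b \<Rightarrow> 'a::comm_ring_1"
  shows "(\<Sum>d\<in>D. \<Sum>e\<in>D. (y d * z e - z d * y e) * (w d * v e - v d * w e)) =
     2 * ((\<Sum>d\<in>D. y d * w d) * (\<Sum>e\<in>D. z e * v e) - (\<Sum>d\<in>D. y d * v d) * (\<Sum>e\<in>D. z e * w e))"
proof -
  have "(y d * z e - z d * y e) * (w d * v e - v d * w e) =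
     (y d * w d) * (z e * v e) - (y d * v d) * (z e * w e) - (z d * w d) * (y e * v e) + (z d * v d) * (y e * w e)"
    for d e by (simp add: algebra_simps)
  then have "(\<Sum>d\<in>D. \<Sum>e\<in>D. (y d * z e - z d * y e) * (w d * v e - v d * w e)) =
     (\<Sum>d\<in>D. y d * w d) * (\<Sum>e\<in>D. z e * v e) - (\<Sum>d\<in>D. y d * v d) * (\<Sum>e\<in>D. z e * w e)
     - (\<Sum>d\<in>D. z d * w d) * (\<Sum>e\<in>D. y e * v e) + (\<Sum>d\<in>D. z d * v d) * (\<Sum>e\<in>D. y e * w e)"
    by (simp add: sum_product sum.distrib sum_subtractf)
  then show ?thesis
    by (simp add: algebra_simps)
qed

lemma pairing_pure_tensor:
  assumes Y: "\<And>m. m \<in> idx7 (k1+2*k2) \<Longrightarrow> Y m = pure_tensor k1 k2 xs' ys' zs' m"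
  shows "pairing k1 k2 (pure_tensor k1 k2 xs ys zs) Y = 2^(k1+2*k2) *
     ((\<Prod>a<k1. dot7 (xs a) (xs' a)) *
      (\<Prod>b<k2. dot7 (ys b) (ys' b) * dot7 (zs b) (zs' b) - dot7 (ys b) (zs' b) * dot7 (zs b) (ys' b)))"
proof -
  let ?n = "k1+2*k2"
  have "(\<Sum>m\<in>idx7 ?n. pure_tensor k1 k2 xs ys zs m * Y m) =
     (\<Sum>m\<in>idx7 ?n. (\<Prod>a<k1. xs a (m!a) * xs' a (m!a)) *
        (\<Prod>b<k2. (ys b (m!(k1+2*b)) * zs b (m!(k1+2*b+1)) - zs b (m!(k1+2*b)) * ys b (m!(k1+2*b+1))) *
                 (ys' b (m!(k1+2*b)) * zs' b (m!(k1+2*b+1)) - zs' b (m!(k1+2*b)) * ys' b (m!(k1+2*b+1)))))"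
    using Y by (intro sum.cong refl) (simp add: pure_tensor_def prod.distrib mult_ac)
  also have "\<dots> = (\<Prod>a<k1. \<Sum>d\<in>{1..7}. xs a d * xs' a d) *
     (\<Prod>b<k2. \<Sum>d\<in>{1..7}. \<Sum>e\<in>{1..7}. (ys b d * zs b e - zs b d * ys b e) * (ys' b d * zs' b e - zs' b d * ys' b e))"
    unfolding idx7_def by (rule sum_idx_prod_blocks)
  also have "\<dots> = 2^k2 * ((\<Prod>a<k1. dot7 (xs a) (xs' a)) *
      (\<Prod>b<k2. dot7 (ys b) (ys' b) * dot7 (zs b) (zs' b) - dot7 (ys b) (zs' b) * dot7 (zs b) (ys' b)))"
    unfolding binet_cauchy_sum dot7_def by (simp add: prod.distrib del: right_diff_distrib_numeral)
  moreover have "(2::complex)^(k1+2*k2) = 2^(k1+k2) * 2^k2"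
    by (simp add: power_add mult_2)
  ultimately show ?thesis
    by (simp add: pairing_eq_sum)
qed

lemma sum_sum_mult_diff:
  fixes x y a b c f :: "'b \<Rightarrow> 'a::comm_ring_1"
  shows "(\<Sum>d\<in>D. \<Sum>e\<in>D. x d * y e * (a d * b e - c d * f e)) =
     (\<Sum>d\<in>D. x d * a d) * (\<Sum>e\<in>D. y e * b e) - (\<Sum>d\<in>D. x d * c d) * (\<Sum>e\<in>D. y e * f e)"
  by (simp add: sum_product sum_subtractf[symmetric] right_diff_distrib mult_ac)

(* g restricted to V7: tact only involves the coordinates 1..7 *)
definition act7 :: "(nat \<Rightarrow> nat \<Rightarrow> complex) \<Rightarrow> oct \<Rightarrow> oct" where
  "act7 g u = (\<lambda>p. \<Sum>d\<in>{1..7}. g p d * u d)"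

lemma tact_hw_vec:
  assumes "m \<in> idx7 (k1+2*k2)"
  shows "tact g (hw_vec u1 u2 k1 k2) m = pure_tensor k1 k2 (\<lambda>_. act7 g u1) (\<lambda>_. act7 g u1) (\<lambda>_. act7 g u2) m"
proof -
  have len: "length m = k1+2*k2"
    using assms by (simp add: idx7_def idx_def)
  have "tact g (hw_vec u1 u2 k1 k2) m =
     (\<Sum>j\<in>idx7 (k1+2*k2). (\<Prod>a<k1. g (m!a) (j!a) * u1 (j!a)) *
        (\<Prod>b<k2. g (m!(k1+2*b)) (j!(k1+2*b)) * g (m!(k1+2*b+1)) (j!(k1+2*b+1)) *
            (u1 (j!(k1+2*b)) * u2 (j!(k1+2*b+1)) - u2 (j!(k1+2*b)) * u1 (j!(k1+2*b+1)))))"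
    unfolding tact_def len prod_lessThan_add_pairs
    by (intro sum.cong refl) (simp add: hw_vec_def pure_tensor_def prod.distrib mult_ac)
  also have "\<dots> = (\<Prod>a<k1. \<Sum>d\<in>{1..7}. g (m!a) d * u1 d) *
        (\<Prod>b<k2. \<Sum>d\<in>{1..7}. \<Sum>e\<in>{1..7}. g (m!(k1+2*b)) d * g (m!(k1+2*b+1)) e *
            (u1 d * u2 e - u2 d * u1 e))"
    unfolding idx7_def by (rule sum_idx_prod_blocks)
  also have "\<dots> = pure_tensor k1 k2 (\<lambda>_. act7 g u1) (\<lambda>_. act7 g u1) (\<lambda>_. act7 g u2) m"
    unfolding pure_tensor_def act7_def sum_sum_mult_diff by (simp add: mult_ac)
  finally show ?thesis .
qed

definition wedge3 :: "(nat \<Rightarrow> complex) \<Rightarrow> (nat \<Rightarrow> complex) \<Rightarrow> nat \<Rightarrow> complex" where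
  "wedge3 \<alpha> \<gamma> p = (\<Sum>d\<in>{0..2}. \<Sum>e\<in>{0..2}. eps3 d e p * (\<alpha> d * \<gamma> e))"

lemma sum_eps3_antisym:
  "(\<Sum>d\<in>{0..2}. \<Sum>e\<in>{0..2}. eps3 d e p * (\<alpha> d * \<gamma> e - \<gamma> d * \<alpha> e)) = 2 * wedge3 \<alpha> \<gamma> p"
proof -
  have "{0..2::nat} = {0, 1, 2}"
    by auto
  then show ?thesis
    by (simp add: wedge3_def eps3_def algebra_simps)
qed

lemma sum_mult_wedge3_self: "(\<Sum>i<3. \<alpha> i * wedge3 \<alpha> \<gamma> i) = 0"
proof -
  have "{0..2::nat} = {0, 1, 2}" "{..<3::nat} = {0, 1, 2}"
    by auto
  then show ?thesis
    by (simp add: wedge3_def eps3_def algebra_simps)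
qed

definition Pcontract :: "(nat \<Rightarrow> nat \<Rightarrow> oct) \<Rightarrow> oct \<Rightarrow> nat \<Rightarrow> complex" where
  "Pcontract T w i = dot7 (Pvec T i) w"

definition pow_tensor ::
  "nat \<Rightarrow> nat \<Rightarrow> (nat \<Rightarrow> complex) \<Rightarrow> (nat \<Rightarrow> complex) \<Rightarrow> nat list \<Rightarrow> nat list \<Rightarrow> complex" where
  "pow_tensor k1 k2 \<alpha> \<delta> r s = (\<Prod>a<k1. \<alpha> (r!a)) * (\<Prod>b<k2. \<delta> (s!b))"

lemma prod_indicator:
  "(\<Prod>a<(k::nat). if P a then 1 else 0 :: 'a::comm_semiring_1) = (if \<forall>a<k. P a then 1 else 0)"
  by (induction k) (auto simp: less_Suc_eq)

lemma take_eq_indicator: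
  assumes "length r = k" "k \<le> length i"
  shows "(if take k i = r then 1 else 0 :: 'a::comm_semiring_1) = (\<Prod>a<k. if i!a = r!a then 1 else 0)"
proof -
  have "take k i = r \<longleftrightarrow> (\<forall>a<k. i!a = r!a)"
    using assms by (auto simp: list_eq_iff_nth_eq)
  then show ?thesis
    by (simp add: prod_indicator)
qed

lemma PT_beta_pure:
  assumes \<beta>: "\<And>m. m \<in> idx7 (k1+2*k2) \<Longrightarrow> \<beta> m = pure_tensor k1 k2 (\<lambda>_. w1) (\<lambda>_. w1) (\<lambda>_. w2) m"
    and r: "r \<in> idx3 k1"
  shows "PT_beta k1 k2 T \<beta> r s =
    2^(k1+3*k2) * pow_tensor k1 k2 (Pcontract T w1) (wedge3 (Pcontract T w1) (Pcontract T w2)) r s"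
proof -
  let ?n = "k1+2*k2"
  define \<alpha> where "\<alpha> = Pcontract T w1"
  define \<gamma> where "\<gamma> = Pcontract T w2"
  have r_len: "length r = k1" and r_set: "set r \<subseteq> {0..2}"
    using r by (auto simp: idx3_def idx_def)
  have r_entries: "r!a \<in> {0..2}" if "a < k1" for a
    using that r_len r_set by (metis nth_mem subsetD)
  have pair: "pairing k1 k2 (pure_tensor k1 k2 (\<lambda>a. Pvec T (i!a)) (\<lambda>b. Pvec T (i!(k1+2*b)))
                                   (\<lambda>b. Pvec T (i!(k1+2*b+1)))) \<beta>
     = 2^?n * ((\<Prod>a<k1. \<alpha> (i!a)) *
         (\<Prod>b<k2. \<alpha> (i!(k1+2*b)) * \<gamma> (i!(k1+2*b+1)) - \<gamma> (i!(k1+2*b)) * \<alpha> (i!(k1+2*b+1))))" for i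
    using pairing_pure_tensor[OF \<beta>] by (simp add: \<alpha>_def \<gamma>_def Pcontract_def)
  have indicator: "(if take k1 i = r then 1 else 0) = (\<Prod>a<k1. if i!a = r!a then 1 else 0 :: complex)"
    if "i \<in> idx3 ?n" for i
    using that r_len by (intro take_eq_indicator) (auto simp: idx3_def idx_def)
  have "PT_beta k1 k2 T \<beta> r s = 2^?n * (\<Sum>i\<in>idx3 ?n.
      (\<Prod>a<k1. (if i!a = r!a then 1 else 0) * \<alpha> (i!a)) *
      (\<Prod>b<k2. eps3 (i!(k1+2*b)) (i!(k1+2*b+1)) (s!b) *
         (\<alpha> (i!(k1+2*b)) * \<gamma> (i!(k1+2*b+1)) - \<gamma> (i!(k1+2*b)) * \<alpha> (i!(k1+2*b+1)))))"
    unfolding PT_beta_def pair sum_distrib_left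
    by (intro sum.cong refl) (simp add: indicator prod.distrib mult_ac)
  also have "\<dots> = 2^?n * ((\<Prod>a<k1. \<Sum>d\<in>{0..2}. (if d = r!a then 1 else 0) * \<alpha> d) *
      (\<Prod>b<k2. \<Sum>d\<in>{0..2}. \<Sum>e\<in>{0..2}. eps3 d e (s!b) * (\<alpha> d * \<gamma> e - \<gamma> d * \<alpha> e)))"
    unfolding idx3_def by (subst sum_idx_prod_blocks) (rule refl)
  also have "\<dots> = 2^?n * ((\<Prod>a<k1. \<alpha> (r!a)) * (\<Prod>b<k2. 2 * wedge3 \<alpha> \<gamma> (s!b)))"
    using r_entries by (simp add: sum_eps3_antisym if_distrib[of "\<lambda>x. x * _"] sum.delta' cong: if_cong)
  also have "\<dots> = 2^?n * 2^k2 * pow_tensor k1 k2 \<alpha> (wedge3 \<alpha> \<gamma>) r s"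
    by (simp add: pow_tensor_def prod.distrib mult_ac)
  also have "\<dots> = 2^(k1+3*k2) * pow_tensor k1 k2 \<alpha> (wedge3 \<alpha> \<gamma>) r s"
    by (simp add: add.commute flip: power_add)
  finally show ?thesis
    by (simp add: \<alpha>_def \<gamma>_def)
qed

lemma pairing_sum_right:
  "pairing k1 k2 X (\<lambda>m. \<Sum>g\<in>G. c g * B g m) = (\<Sum>g\<in>G. c g * pairing k1 k2 X (B g))"
  by (simp add: pairing_eq_sum sum_distrib_left mult_ac sum.swap[of _ G])

lemma PT_beta_sum:
  "PT_beta k1 k2 T (\<lambda>m. \<Sum>g\<in>G. c g * B g m) r s = (\<Sum>g\<in>G. c g * PT_beta k1 k2 T (B g) r s)"
  by (simp add: PT_beta_def pairing_sum_right sum_distrib_left mult_ac sum.swap[of _ G])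

lemma permute_list_idx3:
  assumes "\<sigma> permutes {..<k}" "r \<in> idx3 k"
  shows "permute_list \<sigma> r \<in> idx3 k"
proof -
  have "length r = k" "set r \<subseteq> {0..2}"
    using assms(2) by (auto simp: idx3_def idx_def)
  moreover have "\<sigma> a < k" if "a < k" for a
    using permutes_in_image[OF assms(1)] that by simp
  ultimately show ?thesis
    by (auto simp: idx3_def idx_def permute_list_def)
qed

lemma pow_tensor_permute:
  assumes "\<sigma> permutes {..<k1}" "\<tau> permutes {..<k2}" "length r = k1" "length s = k2"
  shows "pow_tensor k1 k2 \<alpha> \<delta> (permute_list \<sigma> r) (permute_list \<tau> s) = pow_tensor k1 k2 \<alpha> \<delta> r s"
proof -
  have "(\<Prod>a<k1. \<alpha> (permute_list \<sigma> r ! a)) = (\<Prod>a<k1. \<alpha> (r!a))"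
    using assms(3) prod.permute[OF assms(1), of "\<lambda>a. \<alpha> (r!a)"] by (simp add: permute_list_def)
  moreover have "(\<Prod>b<k2. \<delta> (permute_list \<tau> s ! b)) = (\<Prod>b<k2. \<delta> (s!b))"
    using assms(4) prod.permute[OF assms(2), of "\<lambda>b. \<delta> (s!b)"] by (simp add: permute_list_def)
  ultimately show ?thesis
    by (simp add: pow_tensor_def)
qed

lemma pow_tensor_Cons:
  "pow_tensor (Suc k1) (Suc k2) \<alpha> \<delta> (i # r) (j # s) = \<alpha> i * \<delta> j * pow_tensor k1 k2 \<alpha> \<delta> r s"
  by (simp add: pow_tensor_def prod.lessThan_Suc_shift del: prod.lessThan_Suc)

lemma sym_tensor_eq_invariant:
  assumes F: "\<And>r s. r \<in> idx3 k1 \<Longrightarrow> s \<in> idx3 k2 \<Longrightarrow> F r s = \<Phi> r s"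
    and inv: "\<And>\<sigma> \<tau> r s. \<sigma> permutes {..<k1} \<Longrightarrow> \<tau> permutes {..<k2} \<Longrightarrow> r \<in> idx3 k1 \<Longrightarrow> s \<in> idx3 k2 \<Longrightarrow>
                 \<Phi> (permute_list \<sigma> r) (permute_list \<tau> s) = \<Phi> r s"
    and r: "r \<in> idx3 k1" and s: "s \<in> idx3 k2"
  shows "sym_tensor k1 k2 F r s = \<Phi> r s"
proof -
  have "(\<Sum>\<sigma>\<in>{\<sigma>. \<sigma> permutes {..<k1}}. \<Sum>\<tau>\<in>{\<tau>. \<tau> permutes {..<k2}}.
          F (permute_list \<sigma> r) (permute_list \<tau> s)) =
        (\<Sum>\<sigma>\<in>{\<sigma>. \<sigma> permutes {..<k1}}. \<Sum>\<tau>\<in>{\<tau>. \<tau> permutes {..<k2}}. \<Phi> r s)"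
    using F inv r s permute_list_idx3 by (intro sum.cong refl) auto
  also have "\<dots> = fact k1 * fact k2 * \<Phi> r s"
    by (simp add: card_permutations)
  finally show ?thesis
    by (simp add: sym_tensor_def)
qed

lemma in_S_kernel_sym_tensor:
  assumes F: "\<And>r s. r \<in> idx3 k1 \<Longrightarrow> s \<in> idx3 k2 \<Longrightarrow>
                F r s = (\<Sum>g\<in>G. c g * pow_tensor k1 k2 (\<alpha> g) (\<delta> g) r s)"
    and orth: "\<And>g. g \<in> G \<Longrightarrow> (\<Sum>i<3. \<alpha> g i * \<delta> g i) = 0"
  shows "in_S_kernel k1 k2 (sym_tensor k1 k2 F)"
proof (cases "k1 = 0 \<or> k2 = 0")
  case True
  then show ?thesis
    by (auto simp: in_S_kernel_def)
next
  case False
  then obtain l1 l2 where k1: "k1 = Suc l1" and k2: "k2 = Suc l2"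
    by (metis not0_implies_Suc)
  let ?\<Phi> = "\<lambda>r s. \<Sum>g\<in>G. c g * pow_tensor k1 k2 (\<alpha> g) (\<delta> g) r s"
  have sym: "sym_tensor k1 k2 F r s = ?\<Phi> r s" if "r \<in> idx3 k1" "s \<in> idx3 k2" for r s
    by (rule sym_tensor_eq_invariant[OF F _ that])
      (auto simp: pow_tensor_permute idx3_def idx_def intro!: sum.cong)
  have "(\<Sum>i<3. sym_tensor k1 k2 F (i # r) (i # s)) = 0" if "r \<in> idx3 l1" "s \<in> idx3 l2" for r s
  proof -
    have "(\<Sum>i<3. sym_tensor k1 k2 F (i # r) (i # s)) = (\<Sum>i<3. ?\<Phi> (i # r) (i # s))"
      using that k1 k2 by (intro sum.cong refl sym) (auto simp: idx3_def idx_def)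
    also have "\<dots> = (\<Sum>g\<in>G. c g * pow_tensor l1 l2 (\<alpha> g) (\<delta> g) r s * (\<Sum>i<3. \<alpha> g i * \<delta> g i))"
      unfolding k1 k2 pow_tensor_Cons
      by (simp add: sum.swap[of _ "{..<3}"] sum_distrib_left mult_ac)
    also have "\<dots> = 0"
      by (simp add: orth)
    finally show ?thesis .
  qed
  then show ?thesis
    by (simp add: in_S_kernel_def k1 k2)
qed

theorem lemma6p5:
  fixes k1 k2 :: nat and u1 u2 :: oct and \<beta> :: "nat list \<Rightarrow> complex"
    and T :: "nat \<Rightarrow> nat \<Rightarrow> oct"
  assumes "hw_pair u1 u2"
    and "\<beta> \<in> Wrep u1 u2 k1 k2"
    and "T \<in> JC"
  shows "in_S_kernel k1 k2 (sym_tensor k1 k2 (PT_beta k1 k2 T \<beta>))"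
proof -
  obtain G c where "\<forall>m. \<beta> m = (\<Sum>g\<in>G. c g * tact g (hw_vec u1 u2 k1 k2) m)"
    using assms(2) by (auto simp: Wrep_def)
  then have \<beta>: "\<beta> = (\<lambda>m. \<Sum>g\<in>G. c g * tact g (hw_vec u1 u2 k1 k2) m)"
    by auto
  define \<alpha> where "\<alpha> g = Pcontract T (act7 g u1)" for g
  define \<delta> where "\<delta> g = wedge3 (\<alpha> g) (Pcontract T (act7 g u2))" for g
  show ?thesis
  proof (rule in_S_kernel_sym_tensor)
    show "PT_beta k1 k2 T \<beta> r s = (\<Sum>g\<in>G. (c g * 2^(k1+3*k2)) * pow_tensor k1 k2 (\<alpha> g) (\<delta> g) r s)"
      if "r \<in> idx3 k1" for r s
      unfolding \<beta> PT_beta_sum \<alpha>_def \<delta>_def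
      by (simp add: PT_beta_pure[OF tact_hw_vec that] mult.assoc)
    show "(\<Sum>i<3. \<alpha> g i * \<delta> g i) = 0" for g
      by (simp add: \<delta>_def sum_mult_wedge3_self)
  qed
qed

end
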